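(* Let $I$ be a quasiconcave function and put $\widetilde I(t)=t/I(t)$. Then (i) $T_I$ is bounded on $m_{\widetilde I}$, i.e. $\|T_If\|_{m_{\widetilde I}}\lesssim\|f\|_{m_{\widetilde I}}$ for $f\in\mathcal M_+(0,1)$; (ii) $T_I$ is bounded on $L^1$ if and only if $\int_0^t\frac{I(s)}{s}ds\lesssim I(t)$ for $t\in(0,1)$.
   Context: A quasiconcave function is a nondecreasing bijection $I:(0,1)\to(0,1)$ with $I(0+)=0$, $I(1-)=1$ and $t\mapsto I(t)/t$ nonincreasing. $\mathcal M_+(0,1)$: nonnegative measurable functions on $(0,1)$; $f^*$: nonincreasing rearrangement. $T_If(t)=\frac{I(t)}{t}\sup_{t\le s<1}\frac{s}{I(s)}f^*(s)$. For a nondecreasing $J$, $\|f\|_{m_J}=\sup_{0<t<1}J(t)f^*(t)$. $A\lesssim B$ means $A\le CB$ with $C$ independent of $f$ and $t$. *)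

theory Defs
  imports "HOL-Analysis.Analysis"
begin

definition quasiconcave :: "(real \<Rightarrow> real) \<Rightarrow> bool" where
  "quasiconcave I \<longleftrightarrow>
     bij_betw I {0<..<1} {0<..<1} \<and>
     mono_on {0<..<1} I \<and>
     (I \<longlongrightarrow> 0) (at_right 0) \<and>
     (I \<longlongrightarrow> 1) (at_left 1) \<and>
     (\<forall>s t. 0 < s \<and> s \<le> t \<and> t < 1 \<longrightarrow> I t / t \<le> I s / s)"

text \<open>Nonnegative measurable functions on (0,1) (values in [0,\<infinity>]); only the values on (0,1) matter.\<close>
definition Mplus :: "(real \<Rightarrow> ennreal) set" where
  "Mplus = borel_measurable lebesgue"

definition distf :: "(real \<Rightarrow> ennreal) \<Rightarrow> ennreal \<Rightarrow> ennreal" where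
  "distf f s = emeasure lebesgue {x \<in> {0<..<1}. s < f x}"

definition rearr :: "(real \<Rightarrow> ennreal) \<Rightarrow> real \<Rightarrow> ennreal" where
  "rearr f t = Inf {s. distf f s \<le> ennreal t}"

definition T_op :: "(real \<Rightarrow> real) \<Rightarrow> (real \<Rightarrow> ennreal) \<Rightarrow> real \<Rightarrow> ennreal" where
  "T_op I f t = ennreal (I t / t) * (SUP s\<in>{t..<1}. ennreal (s / I s) * rearr f s)"

definition m_norm :: "(real \<Rightarrow> real) \<Rightarrow> (real \<Rightarrow> ennreal) \<Rightarrow> ennreal" where
  "m_norm J f = (SUP t\<in>{0<..<1}. ennreal (J t) * rearr f t)"

definition L1_norm :: "(real \<Rightarrow> ennreal) \<Rightarrow> ennreal" where
  "L1_norm f = (\<integral>\<^sup>+ x \<in> {0<..<1}. f x \<partial>lebesgue)"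

end

theory Submission
  imports Defs
begin

text \<open>
  (i) \<open>T\<^sub>I f\<close> is nonincreasing, so \<open>(T\<^sub>I f)\<^sup>* \<le> T\<^sub>I f\<close>; and \<open>t / I(t) \<cdot> T\<^sub>I f(t)\<close> is a supremum of
  values \<open>s / I(s) \<cdot> f\<^sup>*(s)\<close>, each bounded by the norm of \<open>f\<close>.

  (ii) Testing on \<open>f = indicator (0, 2a)\<close>, for which \<open>f\<^sup>*(a) = 1\<close>, gives \<open>T\<^sub>I f(t) \<ge> I(t)/t \<cdot> a/I(a)\<close>
  on \<open>(0, a)\<close> while \<open>\<parallel>f\<parallel>\<^sub>1 \<le> 2a\<close>, which forces \<open>\<integral>\<^sub>0\<^sup>a I(s)/s ds \<lesssim> I(a)\<close>.
  Conversely, \<open>f\<^sup>*/I\<close> is nonincreasing, so \<open>s f\<^sup>*(s)/I(s) \<le> t f\<^sup>*(t)/I(t) + \<integral>\<^sub>t\<^sup>s f\<^sup>*/I\<close> and hence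
  \<open>T\<^sub>I f(t) \<le> f\<^sup>*(t) + I(t)/t \<cdot> \<integral>\<^sub>t\<^sup>1 f\<^sup>*(r)/I(r) dr\<close>. By Tonelli the \<open>L\<^sup>1\<close> norm of the second
  term is \<open>\<integral>\<^sub>0\<^sup>1 f\<^sup>*(r)/I(r) \<cdot> (\<integral>\<^sub>0\<^sup>r I(t)/t dt) dr \<lesssim> \<parallel>f\<^sup>*\<parallel>\<^sub>1\<close>, and \<open>\<parallel>f\<^sup>*\<parallel>\<^sub>1 \<le> \<parallel>f\<parallel>\<^sub>1\<close> by the
  layer cake formula.
\<close>

lemma emeasure_lborel_nonneg_less: "emeasure lborel {s::real. 0 \<le> s \<and> ennreal s < c} = c"
proof (cases c)
  case (real r)
  then have "{s::real. 0 \<le> s \<and> ennreal s < c} = {0..<r}"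
    by (auto simp: ennreal_less_iff)
  then show ?thesis using real by simp
next
  case top
  have "emeasure lborel {0::real..} = \<infinity>"
  proof (rule ccontr)
    assume "emeasure lborel {0::real..} \<noteq> \<infinity>"
    then obtain r where r: "emeasure lborel {0::real..} = ennreal r" "0 \<le> r"
      by (cases "emeasure lborel {0::real..}") auto
    have "emeasure lborel {0::real..r+1} \<le> emeasure lborel {0::real..}"
      by (rule emeasure_mono) auto
    then show False using r by (simp add: ennreal_le_iff)
  qed
  moreover have "{s::real. 0 \<le> s \<and> ennreal s < c} = {0..}" using top by auto
  ultimately show ?thesis using top by simp
qed

lemma sigma_finite_lebesgue: "sigma_finite_measure (lebesgue :: real measure)"
proof
  show "\<exists>A::real set set. countable A \<and> A \<subseteq> sets lebesgue \<and> \<Union>A = space lebesgue \<and>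
          (\<forall>a\<in>A. emeasure lebesgue a \<noteq> \<infinity>)"
  proof (intro exI[of _ "range (\<lambda>n::nat. {-real n..real n})"] conjI)
    show "\<Union>(range (\<lambda>n::nat. {-real n..real n})) = space lebesgue"
    proof auto
      fix x :: real
      obtain n :: nat where "\<bar>x\<bar> \<le> real n" using real_arch_simple by blast
      then show "\<exists>n. - real n \<le> x \<and> x \<le> real n" by (intro exI[of _ n]) auto
    qed
  qed (auto simp: emeasure_lborel_Icc_eq)
qed

lemma nn_integral_layer_cake:
  assumes "sigma_finite_measure M" and [measurable]: "f \<in> borel_measurable M"
  shows "(\<integral>\<^sup>+x. f x \<partial>M) = (\<integral>\<^sup>+s\<in>{0..}. emeasure M {x\<in>space M. ennreal s < f x} \<partial>lborel)"
proof -
  interpret M: sigma_finite_measure M by fact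
  interpret pair_sigma_finite M lborel ..
  have "(\<integral>\<^sup>+x. f x \<partial>M) =
      (\<integral>\<^sup>+x. (\<integral>\<^sup>+s. indicator {s. 0 \<le> s \<and> ennreal s < f x} s \<partial>lborel) \<partial>M)"
    by (simp add: emeasure_lborel_nonneg_less)
  also have "\<dots> = (\<integral>\<^sup>+s. (\<integral>\<^sup>+x. indicator {s. 0 \<le> s \<and> ennreal s < f x} s \<partial>M) \<partial>lborel)"
    by (rule Fubini'[symmetric]) measurable
  also have "\<dots> = (\<integral>\<^sup>+s\<in>{0..}. emeasure M {x\<in>space M. ennreal s < f x} \<partial>lborel)"
  proof (rule nn_integral_cong)
    fix s :: real
    have "(\<integral>\<^sup>+x. indicator {s. 0 \<le> s \<and> ennreal s < f x} s \<partial>M) =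
        (\<integral>\<^sup>+x. indicator {0..} s * indicator {x\<in>space M. ennreal s < f x} x \<partial>M)"
      by (rule nn_integral_cong) (auto simp: indicator_def)
    then show "(\<integral>\<^sup>+x. indicator {s. 0 \<le> s \<and> ennreal s < f x} s \<partial>M) =
        emeasure M {x\<in>space M. ennreal s < f x} * indicator {0..} s"
      by (simp add: nn_integral_cmult_indicator mult.commute)
  qed
  finally show ?thesis .
qed

lemma rearr_antimono: "t \<le> t' \<Longrightarrow> rearr f t' \<le> rearr f t"
  unfolding rearr_def by (rule Inf_superset_mono) (auto intro: order_trans ennreal_leI)

lemma rearr_le_of_distf_le: "distf f y \<le> ennreal t \<Longrightarrow> rearr f t \<le> y"
  unfolding rearr_def by (auto intro: Inf_lower)

lemma borel_measurable_rearr [measurable]: "rearr f \<in> borel_measurable borel"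
proof (rule borel_measurableI_greater)
  fix y
  have "is_interval {x. y < rearr f x}"
    unfolding is_interval_1 using rearr_antimono[of _ _ f] by (auto intro: less_le_trans)
  then show "{x \<in> space borel. y < rearr f x} \<in> sets borel"
    using real_interval_borel_measurable by simp
qed

lemma rearr_le_of_antimono:
  assumes "0 \<le> t" and antimono: "\<And>x. t \<le> x \<Longrightarrow> x < 1 \<Longrightarrow> g x \<le> g t"
  shows "rearr g t \<le> g t"
proof (rule rearr_le_of_distf_le)
  have "{x \<in> {0<..<1}. g t < g x} \<subseteq> {0<..<t}"
    using antimono by (force simp: not_less[symmetric])
  then have "distf g (g t) \<le> emeasure lebesgue {0<..<t}"
    unfolding distf_def by (rule emeasure_mono) simp
  then show "distf g (g t) \<le> ennreal t" using assms by simp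
qed

lemma emeasure_rearr_greater_le_distf:
  "emeasure lborel {t \<in> {0<..<1}. y < rearr f t} \<le> distf f y"
proof (cases "distf f y")
  case (real d)
  have "{t \<in> {0<..<1}. y < rearr f t} \<subseteq> {0<..<d}"
  proof clarsimp
    fix t :: real assume t: "0 < t" "t < 1" "y < rearr f t"
    then have "\<not> distf f y \<le> ennreal t"
      using rearr_le_of_distf_le[of f y t] by auto
    then show "t < d" using real t by (auto simp: ennreal_le_iff)
  qed
  then have "emeasure lborel {t \<in> {0<..<1}. y < rearr f t} \<le> emeasure lborel {0<..<d}"
    by (rule emeasure_mono) simp
  then show ?thesis using real by simp
qed simp

lemma nn_integral_rearr_le:
  assumes "f \<in> Mplus"
  shows "(\<integral>\<^sup>+t\<in>{0<..<1}. rearr f t \<partial>lborel) \<le> L1_norm f"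
proof -
  have [measurable]: "f \<in> borel_measurable lebesgue" using assms by (simp add: Mplus_def)
  have level_set: "{x. ennreal s < g x * indicator {0<..<1} x} = {x \<in> {0<..<1}. ennreal s < g x}"
    for g :: "real \<Rightarrow> ennreal" and s
    by (auto simp: indicator_def)
  have "(\<integral>\<^sup>+t\<in>{0<..<1}. rearr f t \<partial>lborel) =
      (\<integral>\<^sup>+s\<in>{0..}. emeasure lborel {t \<in> {0<..<1}. ennreal s < rearr f t} \<partial>lborel)"
    by (subst nn_integral_layer_cake) (auto simp: sigma_finite_lborel level_set)
  also have "\<dots> \<le> (\<integral>\<^sup>+s\<in>{0..}. distf f (ennreal s) \<partial>lborel)"
    by (intro nn_integral_mono mult_right_mono emeasure_rearr_greater_le_distf) simp
  also have "\<dots> = L1_norm f"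
  proof -
    have "(\<lambda>x. f x * indicator {0<..<1} x) \<in> borel_measurable lebesgue"
      by (intro borel_measurable_times_ennreal borel_measurable_indicator) simp_all
    from nn_integral_layer_cake[OF sigma_finite_lebesgue this] show ?thesis
      by (simp add: L1_norm_def distf_def level_set)
  qed
  finally show ?thesis .
qed

lemma ennreal_divide_times_flip: "0 < a \<Longrightarrow> 0 < b \<Longrightarrow> ennreal (a / b) * ennreal (b / a) = 1"
  by (simp flip: ennreal_mult'')

lemma quasiconcave_pos: "quasiconcave I \<Longrightarrow> 0 < t \<Longrightarrow> t < 1 \<Longrightarrow> 0 < I t"
  unfolding quasiconcave_def using bij_betwE by fastforce

lemma quasiconcave_mono: "quasiconcave I \<Longrightarrow> 0 < s \<Longrightarrow> s \<le> t \<Longrightarrow> t < 1 \<Longrightarrow> I s \<le> I t"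
  unfolding quasiconcave_def by (auto intro: mono_onD)

lemma quasiconcave_ratio_antimono:
  "quasiconcave I \<Longrightarrow> 0 < s \<Longrightarrow> s \<le> t \<Longrightarrow> t < 1 \<Longrightarrow> I t / t \<le> I s / s"
  unfolding quasiconcave_def by auto

lemma T_op_antimono:
  assumes "quasiconcave I" "0 < t" "t \<le> x" "x < 1"
  shows "T_op I f x \<le> T_op I f t"
  unfolding T_op_def
proof (rule mult_mono)
  show "ennreal (I x / x) \<le> ennreal (I t / t)"
    using quasiconcave_ratio_antimono[OF assms] by (rule ennreal_leI)
  show "(SUP s\<in>{x..<1}. ennreal (s / I s) * rearr f s) \<le> (SUP s\<in>{t..<1}. ennreal (s / I s) * rearr f s)"
    by (rule SUP_subset_mono) (use assms in auto)
qed auto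

lemma rearr_T_op_le: "quasiconcave I \<Longrightarrow> 0 < t \<Longrightarrow> rearr (T_op I f) t \<le> T_op I f t"
  by (rule rearr_le_of_antimono) (auto intro: T_op_antimono)

lemma m_norm_T_op_le:
  assumes qc: "quasiconcave I"
  shows "m_norm (\<lambda>t. t / I t) (T_op I f) \<le> m_norm (\<lambda>t. t / I t) f"
  unfolding m_norm_def[of _ "T_op I f"]
proof (rule SUP_least)
  fix t :: real assume t: "t \<in> {0<..<1}"
  have "ennreal (t / I t) * rearr (T_op I f) t \<le> ennreal (t / I t) * T_op I f t"
    using rearr_T_op_le[OF qc] t by (intro mult_left_mono) auto
  also have "\<dots> = (ennreal (t / I t) * ennreal (I t / t)) * (SUP s\<in>{t..<1}. ennreal (s / I s) * rearr f s)"
    unfolding T_op_def by (simp add: mult.assoc)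
  also have "ennreal (t / I t) * ennreal (I t / t) = 1"
    using quasiconcave_pos[OF qc] t by (simp add: ennreal_divide_times_flip)
  also have "1 * (SUP s\<in>{t..<1}. ennreal (s / I s) * rearr f s) \<le> m_norm (\<lambda>t. t / I t) f"
    unfolding m_norm_def by (simp, rule SUP_subset_mono) (use t in auto)
  finally show "ennreal (t / I t) * rearr (T_op I f) t \<le> m_norm (\<lambda>t. t / I t) f" .
qed

lemma borel_measurable_mono_on_indicator:
  fixes I :: "real \<Rightarrow> real" and \<phi> :: "real \<Rightarrow> real \<Rightarrow> ennreal"
  assumes "mono_on A I" and [measurable]: "A \<in> sets borel"
    and [measurable]: "case_prod \<phi> \<in> borel_measurable (borel \<Otimes>\<^sub>M borel)"
  shows "(\<lambda>x. \<phi> x (I x) * indicator A x) \<in> borel_measurable borel"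
proof -
  define J where "J x = indicator A x *\<^sub>R I x" for x
  have "I \<in> borel_measurable (restrict_space borel A)"
    using assms(1) by (rule borel_measurable_mono_on_fnc)
  then have [measurable]: "J \<in> borel_measurable borel"
    unfolding J_def by (subst (asm) borel_measurable_restrict_space_iff) auto
  have "(\<lambda>x. \<phi> x (J x) * indicator A x) \<in> borel_measurable borel" by measurable
  also have "(\<lambda>x. \<phi> x (J x) * indicator A x) = (\<lambda>x. \<phi> x (I x) * indicator A x)"
    by (auto simp: J_def indicator_def)
  finally show ?thesis .
qed

lemma borel_measurable_quasiconcave_weights:
  assumes "quasiconcave I"
  shows "(\<lambda>t. ennreal (I t / t) * indicator {0<..<1} t) \<in> borel_measurable borel"
    and "(\<lambda>t. ennreal (1 / I t) * indicator {0<..<1} t) \<in> borel_measurable borel"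
  using assms unfolding quasiconcave_def
  by (auto intro!: borel_measurable_mono_on_indicator[where \<phi>="\<lambda>t y. ennreal (y / t)"]
      borel_measurable_mono_on_indicator[where \<phi>="\<lambda>t y. ennreal (1 / y)"])

lemma T_op_ge: "t \<le> a \<Longrightarrow> a < 1 \<Longrightarrow> ennreal (I t / t) * (ennreal (a / I a) * rearr f a) \<le> T_op I f t"
  unfolding T_op_def by (intro mult_left_mono SUP_upper) auto

lemma L1_norm_indicator: "0 \<le> b \<Longrightarrow> b \<le> 1 \<Longrightarrow> L1_norm (indicator {0<..<b}) = ennreal b"
  unfolding L1_norm_def nn_integral_completion by (simp flip: indicator_inter_arith)

lemma one_le_rearr_indicator:
  assumes "0 \<le> a" "a < b" "b \<le> 1"
  shows "1 \<le> rearr (indicator {0<..<b}) a"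
  unfolding rearr_def
proof (rule Inf_greatest, clarify, rule ccontr)
  fix s :: ennreal assume "distf (indicator {0<..<b}) s \<le> ennreal a" "\<not> 1 \<le> s"
  moreover have "s < 1 \<Longrightarrow> {x \<in> {0<..<1}. s < indicator {0<..<b} x} = {0<..<b}"
    using assms by (auto simp: indicator_def)
  ultimately show False
    using assms by (simp add: distf_def)
qed

lemma T_op_indicator_ge:
  assumes "0 \<le> a" "a < b" "b \<le> 1" "t \<le> a"
  shows "ennreal (I t / t) * ennreal (a / I a) \<le> T_op I (indicator {0<..<b}) t"
proof -
  have "ennreal (I t / t) * ennreal (a / I a) * 1 \<le>
      ennreal (I t / t) * (ennreal (a / I a) * rearr (indicator {0<..<b}) a)"
    unfolding mult.assoc using one_le_rearr_indicator[OF assms(1-3)] by (intro mult_left_mono) auto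
  also have "\<dots> \<le> T_op I (indicator {0<..<b}) t"
    using assms by (intro T_op_ge) auto
  finally show ?thesis by simp
qed

lemma weight_integral_le_of_L1_bounded:
  assumes qc: "quasiconcave I"
    and bounded: "\<And>f. f \<in> Mplus \<Longrightarrow> L1_norm (T_op I f) \<le> C * L1_norm f"
    and a: "0 < a" "a < 1"
  shows "(\<integral>\<^sup>+s\<in>{0<..<a}. ennreal (I s / s) \<partial>lebesgue) \<le> 2 * C * ennreal (I a)"
proof -
  define b where "b = min 1 (2 * a)"
  have b: "a < b" "b \<le> 1" "b \<le> 2 * a" using a by (auto simp: b_def)
  define f :: "real \<Rightarrow> ennreal" where "f = indicator {0<..<b}"
  have "f \<in> Mplus" unfolding Mplus_def f_def by (rule borel_measurable_indicator) simp
  define W where "W = (\<integral>\<^sup>+s\<in>{0<..<a}. ennreal (I s / s) \<partial>lborel)"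
  have "ennreal (a / I a) * W = (\<integral>\<^sup>+t. ennreal (a / I a) * (ennreal (I t / t) * indicator {0<..<a} t) \<partial>lborel)"
  proof -
    have "(\<lambda>t. (ennreal (I t / t) * indicator {0<..<1} t) * indicator {0<..<a} t) \<in> borel_measurable lborel"
      using borel_measurable_quasiconcave_weights(1)[OF qc] by simp
    also have "(\<lambda>t. (ennreal (I t / t) * indicator {0<..<1} t) * indicator {0<..<a} t) =
        (\<lambda>t. ennreal (I t / t) * indicator {0<..<a} t)"
      using a by (auto simp: indicator_def)
    finally show ?thesis unfolding W_def by (rule nn_integral_cmult[symmetric])
  qed
  also have "\<dots> \<le> (\<integral>\<^sup>+t\<in>{0<..<1}. T_op I f t \<partial>lborel)"
    using T_op_indicator_ge[of a b _ I] a b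
    by (intro nn_integral_mono) (auto simp: f_def indicator_def mult.commute)
  also have "\<dots> \<le> C * ennreal b"
    using bounded[OF \<open>f \<in> Mplus\<close>] L1_norm_indicator[of b] b a
    by (simp add: L1_norm_def nn_integral_completion f_def)
  also have "\<dots> \<le> C * ennreal (2 * a)"
    using b by (intro mult_left_mono ennreal_leI) auto
  finally have "ennreal (I a / a) * (ennreal (a / I a) * W) \<le> ennreal (I a / a) * (C * ennreal (2 * a))"
    by (rule mult_left_mono) simp
  moreover have "ennreal (I a / a) * (ennreal (a / I a) * W) = W"
    using quasiconcave_pos[OF qc a] a by (simp add: ennreal_divide_times_flip flip: mult.assoc)
  moreover have "ennreal (I a / a) * (C * ennreal (2 * a)) = 2 * C * ennreal (I a)"
  proof -
    have "ennreal (I a / a) * ennreal (2 * a) = ennreal (2 * I a)"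
      using a by (simp add: mult.commute flip: ennreal_mult'')
    then show ?thesis by (simp add: ennreal_mult'' mult_ac)
  qed
  ultimately show ?thesis by (simp add: W_def nn_integral_completion)
qed

lemma antitone_le_nn_integral:
  fixes h :: "real \<Rightarrow> ennreal"
  assumes "0 \<le> t" "t \<le> s" and antitone: "\<And>x y. t \<le> x \<Longrightarrow> x \<le> y \<Longrightarrow> y \<le> s \<Longrightarrow> h y \<le> h x"
  shows "ennreal s * h s \<le> ennreal t * h t + (\<integral>\<^sup>+r\<in>{t<..<s}. h r \<partial>lborel)"
proof -
  have "ennreal s = ennreal t + ennreal (s - t)"
    using assms(1,2) by (subst ennreal_plus[symmetric]) auto
  then have "ennreal s * h s = ennreal t * h s + ennreal (s - t) * h s"
    by (simp add: distrib_right)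
  also have "ennreal t * h s \<le> ennreal t * h t"
    using assms by (intro mult_left_mono antitone) auto
  also have "ennreal (s - t) * h s = (\<integral>\<^sup>+r. h s * indicator {t<..<s} r \<partial>lborel)"
    using assms(2) by (simp add: nn_integral_cmult_indicator mult.commute)
  also have "\<dots> \<le> (\<integral>\<^sup>+r\<in>{t<..<s}. h r \<partial>lborel)"
    by (intro nn_integral_mono) (auto simp: indicator_def intro: antitone)
  finally show ?thesis by (simp add: add_mono)
qed

lemma T_op_le_rearr_plus_tail:
  assumes qc: "quasiconcave I" and t: "0 < t" "t < 1"
  shows "T_op I f t \<le> rearr f t + ennreal (I t / t) * (\<integral>\<^sup>+r\<in>{t<..<1}. ennreal (1 / I r) * rearr f r \<partial>lborel)"
    (is "_ \<le> _ + _ * ?K")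
proof -
  define h where "h r = ennreal (1 / I r) * rearr f r" for r
  have "ennreal (s / I s) * rearr f s \<le> ennreal t * h t + ?K" if s: "t \<le> s" "s < 1" for s
  proof -
    have "ennreal (s / I s) * rearr f s = ennreal s * h s"
      unfolding h_def mult.assoc[symmetric] using s t by (subst ennreal_mult'[symmetric]) auto
    also have "\<dots> \<le> ennreal t * h t + (\<integral>\<^sup>+r\<in>{t<..<s}. h r \<partial>lborel)"
    proof (rule antitone_le_nn_integral)
      fix x y assume "t \<le> x" "x \<le> y" "y \<le> s"
      then have "0 < I x" "I x \<le> I y"
        using quasiconcave_pos[OF qc] quasiconcave_mono[OF qc] s t by auto
      then show "h y \<le> h x"
        unfolding h_def by (intro mult_mono ennreal_leI divide_left_mono rearr_antimono \<open>x \<le> y\<close>) auto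
    qed (use s t in auto)
    also have "(\<integral>\<^sup>+r\<in>{t<..<s}. h r \<partial>lborel) \<le> ?K"
      unfolding h_def using s by (intro nn_integral_mono) (auto simp: indicator_def)
    finally show ?thesis by (simp add: add_mono)
  qed
  then have "T_op I f t \<le> ennreal (I t / t) * (ennreal t * h t + ?K)"
    unfolding T_op_def by (intro mult_left_mono SUP_least) auto
  also have "\<dots> = ennreal (I t / t) * (ennreal t * h t) + ennreal (I t / t) * ?K"
    by (simp add: distrib_left)
  also have "ennreal (I t / t) * (ennreal t * h t) = rearr f t"
    using quasiconcave_pos[OF qc t] t
    by (simp add: h_def mult.assoc ennreal_divide_times_flip flip: ennreal_mult' mult.assoc)
  finally show ?thesis .
qed

lemma nn_integral_dual_Hardy_le:
  fixes u v g :: "real \<Rightarrow> ennreal"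
  assumes [measurable]: "u \<in> borel_measurable borel" "v \<in> borel_measurable borel" "g \<in> borel_measurable borel"
    and bound: "\<And>r. 0 < r \<Longrightarrow> r < 1 \<Longrightarrow> v r * (\<integral>\<^sup>+t\<in>{0<..<r}. u t \<partial>lborel) \<le> C"
  shows "(\<integral>\<^sup>+t\<in>{0<..<1}. u t * (\<integral>\<^sup>+r\<in>{t<..<1}. v r * g r \<partial>lborel) \<partial>lborel)
    \<le> C * (\<integral>\<^sup>+r\<in>{0<..<1}. g r \<partial>lborel)"
proof -
  define G where "G t r = (if 0 < t \<and> t < r \<and> r < 1 then u t * (v r * g r) else 0)" for t r
  have [measurable]: "case_prod G \<in> borel_measurable (lborel \<Otimes>\<^sub>M lborel)"
    unfolding G_def by measurable
  have "(\<integral>\<^sup>+t\<in>{0<..<1}. u t * (\<integral>\<^sup>+r\<in>{t<..<1}. v r * g r \<partial>lborel) \<partial>lborel) =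
      (\<integral>\<^sup>+t. (\<integral>\<^sup>+r. G t r \<partial>lborel) \<partial>lborel)"
  proof (rule nn_integral_cong)
    fix t
    have "u t * (\<integral>\<^sup>+r\<in>{t<..<1}. v r * g r \<partial>lborel) * indicator {0<..<1} t =
        (\<integral>\<^sup>+r. (u t * indicator {0<..<1} t) * (v r * g r * indicator {t<..<1} r) \<partial>lborel)"
      by (subst nn_integral_cmult) (simp_all add: mult_ac)
    also have "\<dots> = (\<integral>\<^sup>+r. G t r \<partial>lborel)"
      by (rule nn_integral_cong) (auto simp: G_def indicator_def)
    finally show "u t * (\<integral>\<^sup>+r\<in>{t<..<1}. v r * g r \<partial>lborel) * indicator {0<..<1} t = (\<integral>\<^sup>+r. G t r \<partial>lborel)" .
  qed
  also have "\<dots> = (\<integral>\<^sup>+r. (\<integral>\<^sup>+t. G t r \<partial>lborel) \<partial>lborel)"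
    by (rule lborel_pair.Fubini'[symmetric]) measurable
  also have "\<dots> \<le> (\<integral>\<^sup>+r. C * (g r * indicator {0<..<1} r) \<partial>lborel)"
  proof (rule nn_integral_mono)
    fix r
    show "(\<integral>\<^sup>+t. G t r \<partial>lborel) \<le> C * (g r * indicator {0<..<1} r)"
    proof (cases "r \<in> {0<..<1}")
      case True
      have "(\<integral>\<^sup>+t. G t r \<partial>lborel) = (\<integral>\<^sup>+t. (v r * g r) * (u t * indicator {0<..<r} t) \<partial>lborel)"
        using True by (intro nn_integral_cong) (auto simp: G_def indicator_def mult_ac)
      also have "\<dots> = g r * (v r * (\<integral>\<^sup>+t\<in>{0<..<r}. u t \<partial>lborel))"
        by (subst nn_integral_cmult) (simp_all add: mult_ac)
      also have "\<dots> \<le> g r * C"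
        using True by (intro mult_left_mono bound) auto
      finally show ?thesis using True by (simp add: mult.commute)
    next
      case False
      then have "G t r = 0" for t by (auto simp: G_def)
      then show ?thesis by simp
    qed
  qed
  also have "\<dots> = C * (\<integral>\<^sup>+r\<in>{0<..<1}. g r \<partial>lborel)"
    by (rule nn_integral_cmult) measurable
  finally show ?thesis .
qed

lemma weight_integral_div_le:
  assumes qc: "quasiconcave I"
    and weight: "\<And>t. 0 < t \<Longrightarrow> t < 1 \<Longrightarrow> (\<integral>\<^sup>+s\<in>{0<..<t}. ennreal (I s / s) \<partial>lebesgue) \<le> C * ennreal (I t)"
    and r: "0 < r" "r < 1"
  shows "ennreal (1 / I r) * (\<integral>\<^sup>+s\<in>{0<..<r}. ennreal (I s / s) \<partial>lebesgue) \<le> C"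
proof -
  have "ennreal (1 / I r) * (\<integral>\<^sup>+s\<in>{0<..<r}. ennreal (I s / s) \<partial>lebesgue) \<le> ennreal (1 / I r) * (C * ennreal (I r))"
    using weight[OF r] by (rule mult_left_mono) simp
  also have "\<dots> = C"
    using quasiconcave_pos[OF qc r] by (simp add: mult.left_commute flip: ennreal_mult'')
  finally show ?thesis .
qed

lemma L1_norm_T_op_le:
  assumes qc: "quasiconcave I"
    and weight: "\<And>t. 0 < t \<Longrightarrow> t < 1 \<Longrightarrow> (\<integral>\<^sup>+s\<in>{0<..<t}. ennreal (I s / s) \<partial>lebesgue) \<le> C * ennreal (I t)"
    and "f \<in> Mplus"
  shows "L1_norm (T_op I f) \<le> (1 + C) * L1_norm f"
proof -
  define u where "u t = ennreal (I t / t) * indicator {0<..<1} t" for t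
  define v where "v r = ennreal (1 / I r) * indicator {0<..<1} r" for r
  have [measurable]: "u \<in> borel_measurable borel" "v \<in> borel_measurable borel"
    unfolding u_def v_def using borel_measurable_quasiconcave_weights[OF qc] by auto
  define K where "K t = (\<integral>\<^sup>+r\<in>{t<..<1}. v r * rearr f r \<partial>lborel)" for t
  have [measurable]: "Measurable.pred (borel \<Otimes>\<^sub>M borel) (\<lambda>(t, r). r \<in> {t<..<1::real})"
    by (simp only: greaterThanLessThan_iff case_prod_beta) measurable
  have [measurable]: "K \<in> borel_measurable borel"
    unfolding K_def by measurable
  have pointwise: "T_op I f t * indicator {0<..<1} t \<le> rearr f t * indicator {0<..<1} t + u t * K t * indicator {0<..<1} t" for t
  proof (cases "t \<in> {0<..<1}")
    case True
    have "(\<integral>\<^sup>+r\<in>{t<..<1}. ennreal (1 / I r) * rearr f r \<partial>lborel) = K t"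
      unfolding K_def v_def using True by (intro nn_integral_cong) (auto simp: indicator_def)
    then show ?thesis
      using T_op_le_rearr_plus_tail[OF qc, of t f] True by (simp add: u_def)
  qed simp
  have Hardy_bound: "v r * (\<integral>\<^sup>+t\<in>{0<..<r}. u t \<partial>lborel) \<le> C" if r: "0 < r" "r < 1" for r
  proof -
    have "(\<integral>\<^sup>+t\<in>{0<..<r}. u t \<partial>lborel) = (\<integral>\<^sup>+s\<in>{0<..<r}. ennreal (I s / s) \<partial>lebesgue)"
      unfolding u_def nn_integral_completion using r by (intro nn_integral_cong) (auto simp: indicator_def)
    then show ?thesis
      using weight_integral_div_le[OF qc weight r] r by (simp add: v_def)
  qed
  have "L1_norm (T_op I f) = (\<integral>\<^sup>+t\<in>{0<..<1}. T_op I f t \<partial>lborel)"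
    unfolding L1_norm_def nn_integral_completion ..
  also have "\<dots> \<le> (\<integral>\<^sup>+t\<in>{0<..<1}. rearr f t \<partial>lborel) + (\<integral>\<^sup>+t\<in>{0<..<1}. u t * K t \<partial>lborel)"
    by (subst nn_integral_add[symmetric]) (auto intro: nn_integral_mono pointwise)
  also have "(\<integral>\<^sup>+t\<in>{0<..<1}. u t * K t \<partial>lborel) \<le> C * (\<integral>\<^sup>+t\<in>{0<..<1}. rearr f t \<partial>lborel)"
    unfolding K_def by (rule nn_integral_dual_Hardy_le) (auto intro: Hardy_bound)
  also have "(\<integral>\<^sup>+t\<in>{0<..<1}. rearr f t \<partial>lborel) + C * (\<integral>\<^sup>+t\<in>{0<..<1}. rearr f t \<partial>lborel) \<le> (1 + C) * L1_norm f"
    using nn_integral_rearr_le[OF \<open>f \<in> Mplus\<close>] by (simp add: distrib_right mult_left_mono add_mono)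
  finally show ?thesis by (simp add: add_left_mono)
qed

theorem theorem3p5:
  fixes I :: "real \<Rightarrow> real"
  assumes "quasiconcave I"
  shows "(\<exists>C::real. \<forall>f\<in>Mplus.
           m_norm (\<lambda>t. t / I t) (T_op I f) \<le> ennreal C * m_norm (\<lambda>t. t / I t) f)
    \<and> ((\<exists>C::real. \<forall>f\<in>Mplus. L1_norm (T_op I f) \<le> ennreal C * L1_norm f)
         \<longleftrightarrow> (\<exists>C::real. \<forall>t\<in>{0<..<1}.
               (\<integral>\<^sup>+ s \<in> {0<..<t}. ennreal (I s / s) \<partial>lebesgue) \<le> ennreal C * ennreal (I t)))"
proof (intro conjI iffI)
  show "\<exists>C::real. \<forall>f\<in>Mplus. m_norm (\<lambda>t. t / I t) (T_op I f) \<le> ennreal C * m_norm (\<lambda>t. t / I t) f"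
    using m_norm_T_op_le[OF assms] by (intro exI[of _ 1]) simp
next
  assume "\<exists>C::real. \<forall>f\<in>Mplus. L1_norm (T_op I f) \<le> ennreal C * L1_norm f"
  then obtain C where "\<And>f. f \<in> Mplus \<Longrightarrow> L1_norm (T_op I f) \<le> ennreal C * L1_norm f" by blast
  from weight_integral_le_of_L1_bounded[OF assms this]
  show "\<exists>C::real. \<forall>t\<in>{0<..<1}. (\<integral>\<^sup>+ s \<in> {0<..<t}. ennreal (I s / s) \<partial>lebesgue) \<le> ennreal C * ennreal (I t)"
    by (intro exI[of _ "2 * C"]) (simp add: ennreal_mult')
next
  assume "\<exists>C::real. \<forall>t\<in>{0<..<1}. (\<integral>\<^sup>+ s \<in> {0<..<t}. ennreal (I s / s) \<partial>lebesgue) \<le> ennreal C * ennreal (I t)"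
  then obtain C where C: "\<forall>t\<in>{0<..<1}. (\<integral>\<^sup>+ s \<in> {0<..<t}. ennreal (I s / s) \<partial>lebesgue) \<le> ennreal C * ennreal (I t)"
    by blast
  have "L1_norm (T_op I f) \<le> (1 + ennreal C) * L1_norm f" if "f \<in> Mplus" for f
    by (rule L1_norm_T_op_le[OF assms _ that]) (use C in auto)
  then show "\<exists>C::real. \<forall>f\<in>Mplus. L1_norm (T_op I f) \<le> ennreal C * L1_norm f"
    by (intro exI[of _ "1 + max 0 C"]) (simp add: ennreal_max_0)
qed

end
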